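(* Let $A,B\in\mathbb{R}^{N\times N}$ and $T>0$, and assume that $1$ is not an eigenvalue of $e^{T(A+B)}$ (i.e. $1$ is not a Floquet multiplier of $u'(t)=(A+B)u(t)$). Then there exists $\tau_0>0$ such that for every $\tau\in(0,\tau_0)$ the delayed system $u'(t)=Au(t)+Bu(t-\tau)$ has no nontrivial $T$-periodic solutions. *)

theory Defs
  imports "HOL-Analysis.Analysis"
begin

primrec mat_pow :: "real^'n^'n \<Rightarrow> nat \<Rightarrow> real^'n^'n" where
  "mat_pow M 0 = mat 1"
| "mat_pow M (Suc k) = M ** mat_pow M k"

definition mat_exp :: "real^'n^'n \<Rightarrow> real^'n^'n" where
  "mat_exp M = (\<Sum>k. (1 / fact k) *\<^sub>R mat_pow M k)"

definition is_eigenvalue :: "real^'n^'n \<Rightarrow> real \<Rightarrow> bool" where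
  "is_eigenvalue M c \<longleftrightarrow> (\<exists>v. v \<noteq> 0 \<and> M *v v = c *\<^sub>R v)"

definition delay_solution :: "real^'n^'n \<Rightarrow> real^'n^'n \<Rightarrow> real \<Rightarrow> (real \<Rightarrow> real^'n) \<Rightarrow> bool" where
  "delay_solution A B \<tau> u \<longleftrightarrow>
     (\<forall>t. (u has_vector_derivative (A *v u t + B *v u (t - \<tau>))) (at t))"

definition periodic_with :: "real \<Rightarrow> (real \<Rightarrow> 'a) \<Rightarrow> bool" where
  "periodic_with T u \<longleftrightarrow> (\<forall>t. u (t + T) = u t)"

end

theory Submission
  imports Defs
begin

text \<open>Write \<open>C = A + B\<close>. A \<open>T\<close>-periodic solution \<open>u\<close> of the delay equation solves
  \<open>u' = C u + g\<close> with \<open>g s = B (u (s - \<tau>) - u s)\<close>, and \<open>|g| \<le> |B| (|A| + |B|) \<tau> sup |u|\<close>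
  because \<open>|u'| \<le> (|A| + |B|) sup |u|\<close>. The function \<open>exp (- s C) (u s)\<close> has derivative
  \<open>exp (- s C) (g s)\<close>, so by the mean value inequality and periodicity
  \<open>|(exp (- T C) - I) (u 0)| \<le> T exp (T |C|) sup |g|\<close>. Since \<open>1\<close> is not an eigenvalue of
  \<open>exp (T C)\<close>, the map \<open>exp (- T C) - I\<close> is invertible, hence \<open>|u 0| \<le> c \<tau> sup |u|\<close>. By
  translation the same bound holds at every time, which forces \<open>u = 0\<close> once \<open>c \<tau> < 1\<close>.\<close>

text \<open>On \<open>real^'n^'n\<close> the product \<open>*\<close> is componentwise, so the library exponential is not the
  matrix exponential there. The type \<open>'n endo\<close> is a copy of the bounded operators on \<open>real^'n\<close>
  with composition as product, which makes it a Banach algebra.\<close>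

typedef (overloaded) ('n::finite) endo = "UNIV :: ((real^'n) \<Rightarrow>\<^sub>L (real^'n)) set"
  morphisms endo_blinfun Endo ..

setup_lifting type_definition_endo

instantiation endo :: (finite) real_normed_vector
begin
lift_definition zero_endo :: "'a endo" is 0 .
lift_definition plus_endo :: "'a endo \<Rightarrow> 'a endo \<Rightarrow> 'a endo" is "(+)" .
lift_definition minus_endo :: "'a endo \<Rightarrow> 'a endo \<Rightarrow> 'a endo" is "(-)" .
lift_definition uminus_endo :: "'a endo \<Rightarrow> 'a endo" is uminus .
lift_definition scaleR_endo :: "real \<Rightarrow> 'a endo \<Rightarrow> 'a endo" is scaleR .
lift_definition norm_endo :: "'a endo \<Rightarrow> real" is norm .
definition dist_endo :: "'a endo \<Rightarrow> 'a endo \<Rightarrow> real" where "dist_endo a b = norm (a - b)"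
definition sgn_endo :: "'a endo \<Rightarrow> 'a endo" where "sgn_endo x = scaleR (inverse (norm x)) x"
definition uniformity_endo :: "('a endo \<times> 'a endo) filter" where
  "uniformity_endo = (INF e\<in>{0 <..}. principal {(x, y). dist x y < e})"
definition open_endo :: "'a endo set \<Rightarrow> bool"
  where "open_endo S = (\<forall>x\<in>S. \<forall>\<^sub>F (x', y) in uniformity. x' = x \<longrightarrow> y \<in> S)"
instance
  apply standard
  apply (unfold dist_endo_def open_endo_def sgn_endo_def uniformity_endo_def)
  apply (transfer; simp add: algebra_simps norm_triangle_ineq)+
  done
end

instantiation endo :: (finite) real_normed_algebra_1
begin
lift_definition times_endo :: "'a endo \<Rightarrow> 'a endo \<Rightarrow> 'a endo" is "(o\<^sub>L)" .
lift_definition one_endo :: "'a endo" is id_blinfun .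
instance
proof
  have "blinfun_apply id_blinfun (1::real^'a) \<noteq> blinfun_apply 0 1" by (simp add: vec_eq_iff)
  then show "(0::'a endo) \<noteq> 1"
    by (metis endo_blinfun_inject zero_endo.rep_eq one_endo.rep_eq)
qed (transfer; auto intro: blinfun_eqI simp: norm_blinfun_compose blinfun.bilinear_simps)+
end

instance endo :: (finite) banach
proof
  fix X :: "nat \<Rightarrow> 'a endo" assume "Cauchy X"
  hence "Cauchy (\<lambda>n. endo_blinfun (X n))"
    by (simp add: Cauchy_def dist_endo_def dist_norm norm_endo.rep_eq minus_endo.rep_eq)
  then obtain L where "(\<lambda>n. endo_blinfun (X n)) \<longlonglongrightarrow> L"
    by (auto simp: Cauchy_convergent_iff convergent_def)
  hence "X \<longlonglongrightarrow> Endo L"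
    by (simp add: LIMSEQ_def dist_endo_def dist_norm norm_endo.rep_eq minus_endo.rep_eq Endo_inverse)
  thus "convergent X" by (auto simp: convergent_def)
qed

lift_definition endo_apply :: "'n::finite endo \<Rightarrow> real^'n \<Rightarrow> real^'n" is blinfun_apply .

interpretation endo_apply: bounded_bilinear endo_apply
proof
  show "\<exists>K. \<forall>X v. norm (endo_apply X v) \<le> norm X * norm v * K"
    by (rule exI[of _ 1]) (transfer, simp add: norm_blinfun)
qed (transfer, simp add: blinfun.bilinear_simps)+

lemma endo_eqI: "(\<And>v. endo_apply X v = endo_apply Y v) \<Longrightarrow> X = Y"
  by transfer (rule blinfun_eqI)

lemma endo_apply_mult [simp]: "endo_apply (X * Y) v = endo_apply X (endo_apply Y v)"
  by transfer simp

lemma endo_apply_one [simp]: "endo_apply 1 v = v"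
  by transfer simp

lemma norm_endo_apply_le: "norm (endo_apply X v) \<le> norm X * norm v"
  by transfer (rule norm_blinfun)

lift_definition endo_of_matrix :: "real^'n^'n \<Rightarrow> 'n::finite endo" is "\<lambda>M. Blinfun ((*v) M)" .

lemma endo_apply_endo_of_matrix [simp]: "endo_apply (endo_of_matrix M) v = M *v v"
  by transfer (simp add: bounded_linear_Blinfun_apply)

lemma endo_of_matrix_mult: "endo_of_matrix (M ** N) = endo_of_matrix M * endo_of_matrix N"
  by (auto intro!: endo_eqI simp: matrix_vector_mul_assoc[symmetric])

lemma endo_of_matrix_one: "endo_of_matrix (mat 1) = 1"
  by (auto intro!: endo_eqI)

lemma endo_of_matrix_mat_pow: "endo_of_matrix (mat_pow M k) = endo_of_matrix M ^ k"
  by (induction k) (simp_all add: endo_of_matrix_mult endo_of_matrix_one)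

lemma endo_of_matrix_scaleR: "endo_of_matrix (r *\<^sub>R M) = r *\<^sub>R endo_of_matrix M"
  by (auto intro!: endo_eqI simp: scaleR_matrix_vector_assoc endo_apply.scaleR_left)

lemma mat_exp_eq_matrix_endo_exp: "mat_exp M = matrix (endo_apply (exp (endo_of_matrix M)))"
proof -
  let ?X = "endo_of_matrix M"
  have "(\<lambda>k. ?X ^ k /\<^sub>R fact k) sums exp ?X"
    unfolding exp_def by (rule summable_exp_generic[THEN summable_sums])
  then have "(\<lambda>k. endo_apply (?X ^ k /\<^sub>R fact k) (axis j 1) $ i) sums (endo_apply (exp ?X) (axis j 1) $ i)"
    for i j by (rule bounded_linear.sums[OF bounded_linear_compose[OF bounded_linear_vec_nth
        endo_apply.bounded_linear_left]])
  moreover have "endo_apply (?X ^ k /\<^sub>R fact k) (axis j 1) $ i = ((1 / fact k) *\<^sub>R mat_pow M k) $ i $ j"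
    for i j k by (simp add: endo_of_matrix_mat_pow[symmetric] endo_apply.scaleR_left
        matrix_vector_mult_def axis_def if_distrib divide_inverse mult.commute cong: if_cong)
  ultimately have "(\<lambda>k. (1 / fact k) *\<^sub>R mat_pow M k) sums matrix (endo_apply (exp ?X))"
    unfolding sums_def by (intro vec_tendstoI) (simp add: matrix_def)
  then show ?thesis
    unfolding mat_exp_def by (rule sums_unique[symmetric])
qed

lemma mat_exp_mult_vector: "mat_exp M *v v = endo_apply (exp (endo_of_matrix M)) v"
  by (simp add: mat_exp_eq_matrix_endo_exp matrix_works bounded_linear.linear[OF endo_apply.bounded_linear_right])

lemma norm_diff_le_of_vector_derivative_bound:
  fixes f :: "real \<Rightarrow> 'a::real_normed_vector"
  assumes "a \<le> b"
    and deriv: "\<And>x. x \<in> {a..b} \<Longrightarrow> (f has_vector_derivative f' x) (at x)"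
    and bound: "\<And>x. x \<in> {a..b} \<Longrightarrow> norm (f' x) \<le> K"
  shows "norm (f b - f a) \<le> K * (b - a)"
proof -
  have "norm (f b - f a) \<le> K * norm (b - a)"
  proof (rule differentiable_bound[of "{a..b}" f "\<lambda>x h. h *\<^sub>R f' x"])
    show "(f has_derivative (\<lambda>h. h *\<^sub>R f' x)) (at x within {a..b})" if "x \<in> {a..b}" for x
      using deriv[OF that] unfolding has_vector_derivative_def by (rule has_derivative_at_withinI)
    show "onorm (\<lambda>h. h *\<^sub>R f' x) \<le> K" if "x \<in> {a..b}" for x
    proof (rule onorm_le)
      show "norm (h *\<^sub>R f' x) \<le> K * norm h" for h
        using mult_left_mono[OF bound[OF that], of "\<bar>h\<bar>"] by (simp add: mult.commute)
    qed
  qed (use assms(1) in auto)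
  then show ?thesis
    using assms(1) by simp
qed

lemma has_vector_derivative_exp_minus_apply:
  assumes "(u has_vector_derivative endo_apply C (u s) + g) (at s)"
  shows "((\<lambda>s. endo_apply (exp (- (s *\<^sub>R C))) (u s)) has_vector_derivative
           endo_apply (exp (- (s *\<^sub>R C))) g) (at s)"
proof -
  have "((\<lambda>s. exp (s *\<^sub>R - C)) has_vector_derivative exp (s *\<^sub>R - C) * - C) (at s)"
    by (rule exp_scaleR_has_vector_derivative_right)
  from endo_apply.FDERIV[OF this[unfolded has_vector_derivative_def]
      assms[unfolded has_vector_derivative_def]]
  show ?thesis
    by (simp add: has_vector_derivative_def endo_apply.bilinear_simps algebra_simps)
qed

lemma exp_minus_apply_diff_le:
  assumes "T \<ge> 0"
    and deriv: "\<And>s. (u has_vector_derivative endo_apply C (u s) + g s) (at s)"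
    and bound: "\<And>s. s \<in> {0..T} \<Longrightarrow> norm (g s) \<le> G"
  shows "norm (endo_apply (exp (- (T *\<^sub>R C))) (u T) - u 0) \<le> exp (T * norm C) * G * T"
proof -
  have "norm (endo_apply (exp (- (s *\<^sub>R C))) (g s)) \<le> exp (T * norm C) * G" if "s \<in> {0..T}" for s
  proof -
    have "norm (exp (- (s *\<^sub>R C))) \<le> exp (s * norm C)"
      using norm_exp[of "- (s *\<^sub>R C)"] that by simp
    also have "\<dots> \<le> exp (T * norm C)"
      using that by (simp add: mult_right_mono)
    finally have "norm (exp (- (s *\<^sub>R C))) \<le> exp (T * norm C)" .
    then show ?thesis
      using norm_endo_apply_le[of "exp (- (s *\<^sub>R C))" "g s"] bound[OF that]
      by (smt (verit) mult_mono norm_ge_zero)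
  qed
  from norm_diff_le_of_vector_derivative_bound[OF assms(1)
      has_vector_derivative_exp_minus_apply[OF deriv] this]
  show ?thesis
    by simp
qed

lemma exp_minus_sub_id_bounded_below:
  assumes "\<not> is_eigenvalue (mat_exp M) 1"
  obtains K where "K > 0" "\<And>v. K * norm v \<le> norm (endo_apply (exp (- endo_of_matrix M)) v - v)"
proof -
  let ?E = "exp (endo_of_matrix M)"
  have fixed_zero: "v = 0" if "endo_apply (exp (- endo_of_matrix M)) v = v" for v
  proof -
    have "mat_exp M *v v = endo_apply (?E * exp (- endo_of_matrix M)) v"
      using that by (simp add: mat_exp_mult_vector)
    then have "mat_exp M *v v = 1 *\<^sub>R v"
      by (simp add: exp_minus_inverse)
    then show ?thesis
      using assms unfolding is_eigenvalue_def by blast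
  qed
  have "linear (\<lambda>v. endo_apply (exp (- endo_of_matrix M)) v - v)"
    by (intro linear_compose_sub bounded_linear.linear[OF endo_apply.bounded_linear_right] linear_ident)
  moreover have "inj (\<lambda>v. endo_apply (exp (- endo_of_matrix M)) v - v)"
    by (rule injI) (rule fixed_zero[THEN eq_iff_diff_eq_0[THEN iffD2], symmetric, simplified],
        simp add: endo_apply.diff_right algebra_simps)
  ultimately show ?thesis
    using linear_inj_bounded_below_pos that by blast
qed

lemma periodic_with_add_int_mult:
  assumes "periodic_with T u"
  shows "u (t + of_int n * T) = u t"
proof (induction n rule: int_induct[where k = 0])
  case (step1 i)
  have "u (t + of_int (i + 1) * T) = u ((t + of_int i * T) + T)"
    by (simp add: algebra_simps)
  with step1 assms show ?case
    unfolding periodic_with_def by simp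
next
  case (step2 i)
  have "u (t + of_int (i - 1) * T) = u ((t + of_int (i - 1) * T) + T)"
    using assms unfolding periodic_with_def by simp
  also have "\<dots> = u (t + of_int i * T)"
    by (simp add: algebra_simps)
  finally show ?case
    using step2 by simp
qed simp

lemma periodic_with_shift:
  assumes "periodic_with T u"
  shows "periodic_with T (\<lambda>t. u (t + s))"
  unfolding periodic_with_def
proof
  fix t
  show "u (t + T + s) = u (t + s)"
    using assms unfolding periodic_with_def by (metis add.commute add.left_commute)
qed

lemma bdd_above_norm_periodic:
  fixes u :: "real \<Rightarrow> 'a::real_normed_vector"
  assumes "T > 0" "periodic_with T u" "continuous_on UNIV u"
  shows "bdd_above (range (\<lambda>t. norm (u t)))"
proof -
  have "range u \<subseteq> u ` {0..T}"
  proof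
    fix x assume "x \<in> range u"
    then obtain t where x: "x = u t" by blast
    define s where "s = t - of_int \<lfloor>t / T\<rfloor> * T"
    have "s \<in> {0..T}"
      using floor_divide_lower[OF assms(1), of t] floor_divide_upper[OF assms(1), of t]
      unfolding s_def by (simp add: algebra_simps)
    moreover have "u t = u s"
      using periodic_with_add_int_mult[OF assms(2), of s "\<lfloor>t / T\<rfloor>"] unfolding s_def by simp
    ultimately show "x \<in> u ` {0..T}"
      using x by blast
  qed
  moreover have "bounded (u ` {0..T})"
    by (intro compact_imp_bounded compact_continuous_image continuous_on_subset[OF assms(3)]) auto
  ultimately have "bounded (range u)"
    by (rule bounded_subset[rotated])
  then show ?thesis
    by (intro bounded_imp_bdd_above) (simp add: bounded_norm_comp)
qed

lemma delay_solution_continuous: "delay_solution A B \<tau> u \<Longrightarrow> continuous_on UNIV u"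
  unfolding delay_solution_def
  by (intro continuous_at_imp_continuous_on ballI) (metis has_vector_derivative_continuous)

lemma delay_solution_shift:
  assumes "delay_solution A B \<tau> u"
  shows "delay_solution A B \<tau> (\<lambda>t. u (t + s))"
  unfolding delay_solution_def
proof
  fix t
  have "((\<lambda>t. t + s) has_vector_derivative 1) (at t)"
    by (auto intro!: derivative_eq_intros)
  from vector_diff_chain_at[OF this, of u] assms
  show "((\<lambda>t. u (t + s)) has_vector_derivative A *v u (t + s) + B *v u (t - \<tau> + s)) (at t)"
    unfolding delay_solution_def o_def by (simp add: algebra_simps)
qed

lemma norm_matrix_vector_le:
  assumes "norm v \<le> M"
  shows "norm (A *v v) \<le> norm (endo_of_matrix A) * M"
proof -
  have "norm (A *v v) \<le> norm (endo_of_matrix A) * norm v"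
    using norm_endo_apply_le[of "endo_of_matrix A" v] by simp
  also have "\<dots> \<le> norm (endo_of_matrix A) * M"
    using assms by (simp add: mult_left_mono)
  finally show ?thesis .
qed

lemma delay_solution_lag_le:
  assumes "delay_solution A B \<tau> u" "\<tau> \<ge> 0" "\<And>t. norm (u t) \<le> M"
  shows "norm (u (t - \<tau>) - u t) \<le> (norm (endo_of_matrix A) + norm (endo_of_matrix B)) * M * \<tau>"
proof -
  have "norm (A *v u s + B *v u (s - \<tau>)) \<le> (norm (endo_of_matrix A) + norm (endo_of_matrix B)) * M" for s
    using norm_triangle_ineq[of "A *v u s" "B *v u (s - \<tau>)"]
      norm_matrix_vector_le[OF assms(3), of A s] norm_matrix_vector_le[OF assms(3), of B "s - \<tau>"]
    by (simp add: distrib_right)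
  then have "norm (u t - u (t - \<tau>)) \<le> (norm (endo_of_matrix A) + norm (endo_of_matrix B)) * M * (t - (t - \<tau>))"
    using assms(1,2) unfolding delay_solution_def
    by (intro norm_diff_le_of_vector_derivative_bound[where f' = "\<lambda>s. A *v u s + B *v u (s - \<tau>)"]) auto
  then show ?thesis
    by (simp add: norm_minus_commute)
qed

lemma delay_solution_has_vector_derivative:
  assumes "delay_solution A B \<tau> u"
  shows "(u has_vector_derivative
           endo_apply (endo_of_matrix (A + B)) (u s) + B *v (u (s - \<tau>) - u s)) (at s)"
  using assms unfolding delay_solution_def
  by (simp add: matrix_vector_mult_add_rdistrib matrix_vector_mult_diff_distrib)

lemma periodic_delay_solution_norm_le:
  fixes A B :: "real^'n::finite^'n"
  assumes "T > 0" and no_multiplier: "\<not> is_eigenvalue (mat_exp (T *\<^sub>R (A + B))) 1"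
  obtains c where "c \<ge> 0"
    and "\<And>\<tau> u M t. \<tau> > 0 \<Longrightarrow> delay_solution A B \<tau> u \<Longrightarrow> periodic_with T u \<Longrightarrow>
           (\<And>s. norm (u s) \<le> M) \<Longrightarrow> norm (u t) \<le> c * \<tau> * M"
proof -
  define C where "C = endo_of_matrix (A + B)"
  obtain K where K: "K > 0" "\<And>v. K * norm v \<le> norm (endo_apply (exp (- (T *\<^sub>R C))) v - v)"
    using exp_minus_sub_id_bounded_below[OF no_multiplier] by (auto simp: C_def endo_of_matrix_scaleR)
  define L where "L = norm (endo_of_matrix A) + norm (endo_of_matrix B)"
  define c where "c = exp (T * norm C) * norm (endo_of_matrix B) * L * T / K"
  have "norm (u t) \<le> c * \<tau> * M"
    if "\<tau> > 0" "delay_solution A B \<tau> u" "periodic_with T u" "\<And>s. norm (u s) \<le> M" for \<tau> u M t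
  proof -
    define v where "v s = u (s + t)" for s
    have v_sol: "delay_solution A B \<tau> v"
      unfolding v_def by (rule delay_solution_shift[OF that(2)])
    have v_per: "v T = v 0"
      using that(3) unfolding v_def periodic_with_def by (metis add.commute add_0)
    have v_bound: "norm (v s) \<le> M" for s
      unfolding v_def by (rule that(4))
    define g where "g s = B *v (v (s - \<tau>) - v s)" for s
    have "(v has_vector_derivative endo_apply C (v s) + g s) (at s)" for s
      unfolding g_def C_def by (rule delay_solution_has_vector_derivative[OF v_sol])
    moreover have "norm (g s) \<le> norm (endo_of_matrix B) * (L * M * \<tau>)" for s
      unfolding g_def L_def
      by (intro norm_matrix_vector_le delay_solution_lag_le[OF v_sol]) (use that(1) v_bound in auto)
    ultimately have "norm (endo_apply (exp (- (T *\<^sub>R C))) (v T) - v 0)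
        \<le> exp (T * norm C) * (norm (endo_of_matrix B) * (L * M * \<tau>)) * T"
      using assms(1) by (intro exp_minus_apply_diff_le) auto
    also have "\<dots> = K * (c * \<tau> * M)"
      using K(1) by (simp add: c_def)
    finally have "K * norm (v 0) \<le> K * (c * \<tau> * M)"
      using K(2)[of "v 0"] v_per by simp
    then show ?thesis
      using K(1) by (simp add: v_def)
  qed
  moreover have "c \<ge> 0"
    using K(1) assms(1) by (simp add: c_def L_def)
  ultimately show ?thesis
    using that by blast
qed

lemma eq_0_if_norm_bound_contracts:
  fixes u :: "real \<Rightarrow> 'a::real_normed_vector"
  assumes "bdd_above (range (\<lambda>t. norm (u t)))" "q < 1"
    and contracts: "\<And>M t. (\<And>s. norm (u s) \<le> M) \<Longrightarrow> norm (u t) \<le> q * M"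
  shows "u = (\<lambda>t. 0)"
proof -
  define S where "S = (SUP t. norm (u t))"
  have le_S: "norm (u t) \<le> S" for t
    unfolding S_def by (rule cSUP_upper[OF UNIV_I assms(1)])
  then have "norm (u t) \<le> q * S" for t
    by (rule contracts)
  then have "S \<le> q * S"
    unfolding S_def by (rule cSUP_least[OF UNIV_not_empty])
  then have "S \<le> 0"
    using mult_strict_right_mono[OF assms(2), of S] by (cases "S > 0") auto
  then show ?thesis
    using le_S by (auto intro: norm_le_zero_iff[THEN iffD1, OF order_trans])
qed

theorem lemma3:
  fixes A B :: "real^'n^'n" and T :: real
  assumes "T > 0"
    and "\<not> is_eigenvalue (mat_exp (T *\<^sub>R (A + B))) 1"
  shows "\<exists>\<tau>0 > 0. \<forall>\<tau>. 0 < \<tau> \<and> \<tau> < \<tau>0 \<longrightarrow>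
           (\<forall>u. delay_solution A B \<tau> u \<and> periodic_with T u \<longrightarrow> u = (\<lambda>t. 0))"
proof -
  obtain c where c: "c \<ge> 0"
    and bound: "\<And>\<tau> u M t. \<tau> > 0 \<Longrightarrow> delay_solution A B \<tau> u \<Longrightarrow> periodic_with T u \<Longrightarrow>
           (\<And>s. norm (u s) \<le> M) \<Longrightarrow> norm (u t) \<le> c * \<tau> * M"
    using periodic_delay_solution_norm_le[OF assms] by blast
  have "u = (\<lambda>t. 0)"
    if "0 < \<tau>" "\<tau> < 1 / (c + 1)" "delay_solution A B \<tau> u" "periodic_with T u" for \<tau> u
  proof (rule eq_0_if_norm_bound_contracts)
    show "bdd_above (range (\<lambda>t. norm (u t)))"
      by (rule bdd_above_norm_periodic[OF assms(1) that(4) delay_solution_continuous[OF that(3)]])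
    show "c * \<tau> < 1"
      using c that(1,2) by (simp add: field_simps)
  qed (rule bound[OF that(1,3,4)])
  then show ?thesis
    using c by (intro exI[of _ "1 / (c + 1)"]) auto
qed

end
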